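(* Let $\eta\in\mathbb{R}$, $h>0$, $x_0\in\mathbb{R}$, and let $(\Delta W_n)_{n\ge0}$ and $(\Delta\tilde W_n)_{n\ge0}$ be mutually independent sequences of i.i.d. $\mathcal{N}(0,h)$ random variables. For $f(x)=-x$, $g(x)=1+\eta x$ and $F(x)=f(x)-\tfrac12g'(x)g(x)$, define the three-stage Runge--Kutta iterates $$x_{n+1}=x_n+\tfrac14(F_1+3F_3)h+\tfrac14(G_1+3G_3)\Delta W_n+\tfrac{1}{2\sqrt3}\Big(f'(x_n)g(x_n)-g'(x_n)f(x_n)-\tfrac12g''(x_n)g(x_n)^2\Big)h\,\Delta\tilde W_n,$$ where $F_1=F(x_n)$, $G_1=g(x_n)$, $F_2=F(Y_2)$, $G_2=g(Y_2)$ with $Y_2=x_n+\tfrac13F_1h+\tfrac13G_1\Delta W_n$, and $F_3=F(Y_3)$, $G_3=g(Y_3)$ with $Y_3=x_n+\tfrac23F_2h+\tfrac23G_2\Delta W_n$, starting from the deterministic value $x_0$. Let $\mu^{(1)}_n=\mathbb{E}[x_n]$. Then $$\mu^{(1)}_{n+1}=-\tfrac1{24}h^2\eta(2+3\eta^2)-\tfrac1{48}h^3\eta(2+\eta^2)^2+\Big(1-h+\tfrac18h^2(4-\eta^4)-\tfrac1{48}h^3(2+\eta^2)^3\Big)\mu^{(1)}_n.$$ Consequently, if $\big|1-h+\tfrac18h^2(4-\eta^4)-\tfrac1{48}h^3(2+\eta^2)^3\big|<1$, then $$\mu^{(1)}_n\to-\frac{h\eta\big(4+6\eta^2+h(2+\eta^2)^2\big)}{48-6h(4-\eta^4)+h^2(2+\eta^2)^3}\quad(n\to\infty),$$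 which is $O(h)$ as $h\to0$.
   Context: Here $\Delta W_n,\Delta\tilde W_n$ are independent of $x_0,\dots,x_n$. *)

theory Defs
  imports "HOL-Probability.Probability" "HOL-Library.Landau_Symbols"
begin

definition rk3_step :: "(real \<Rightarrow> real) \<Rightarrow> (real \<Rightarrow> real) \<Rightarrow> real \<Rightarrow> real \<Rightarrow> real \<Rightarrow> real \<Rightarrow> real" where
  "rk3_step f g h x dW dWt =
    (let F = (\<lambda>y. f y - 1/2 * deriv g y * g y);
         F1 = F x; G1 = g x;
         Y2 = x + 1/3 * F1 * h + 1/3 * G1 * dW;
         F2 = F Y2; G2 = g Y2;
         Y3 = x + 2/3 * F2 * h + 2/3 * G2 * dW;
         F3 = F Y3; G3 = g Y3
     in x + 1/4 * (F1 + 3 * F3) * h + 1/4 * (G1 + 3 * G3) * dW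
          + 1 / (2 * sqrt 3) * (deriv f x * g x - deriv g x * f x
                                 - 1/2 * deriv (deriv g) x * (g x)^2) * h * dWt)"

primrec rk3_iter :: "(real \<Rightarrow> real) \<Rightarrow> (real \<Rightarrow> real) \<Rightarrow> real \<Rightarrow> real \<Rightarrow>
    (nat \<Rightarrow> 'a \<Rightarrow> real) \<Rightarrow> (nat \<Rightarrow> 'a \<Rightarrow> real) \<Rightarrow> nat \<Rightarrow> 'a \<Rightarrow> real" where
  "rk3_iter f g h x0 dW dWt 0 = (\<lambda>\<omega>. x0)"
| "rk3_iter f g h x0 dW dWt (Suc n) =
     (\<lambda>\<omega>. rk3_step f g h (rk3_iter f g h x0 dW dWt n \<omega>) (dW n \<omega>) (dWt n \<omega>))"

end

theory Submission
  imports Defs "HOL-Real_Asymp.Real_Asymp"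
begin

(* For affine drift and diffusion every stage of the scheme is affine in x_n, and one step collapses to
   x_(n+1) = R(k_n) x_n + A_n + const * dWt_n, where R z = 1 + z + z^2/2 + z^3/6 is the stability
   polynomial of the three-stage method and k_n, A_n are polynomials of degree at most three in dW_n.
   As x_n is a measurable function of the increments with index below n, it is independent of dW_n, so
   taking expectations gives an affine recursion mu_(n+1) = a + c mu_n whose coefficients only involve
   the Gaussian moments E dW = E dW^3 = 0 and E dW^2 = h. *)

definition rk3_stability :: "real \<Rightarrow> real" where
  "rk3_stability z = 1 + z + z^2 / 2 + z^3 / 6"

lemma deriv_affine: "deriv (\<lambda>y::real. a * y + b) = (\<lambda>_. a)"
  by (rule ext, rule DERIV_imp_deriv) (auto intro!: derivative_eq_intros)

lemma rk3_step_affine: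
  fixes \<alpha> \<beta> \<gamma> \<delta> h x w t :: real
  defines "k \<equiv> (\<alpha> - \<gamma>^2 / 2) * h + \<gamma> * w"
    and "e \<equiv> (\<beta> - \<gamma> * \<delta> / 2) * h + \<delta> * w"
    \<comment> \<open>\<open>k * x + e\<close> is the increment \<open>F x * h + g x * w\<close> of every stage\<close>
  shows "rk3_step (\<lambda>y. \<alpha> * y + \<beta>) (\<lambda>y. \<gamma> * y + \<delta>) h x w t
    = x * rk3_stability k + (1 + k / 2 + k^2 / 6) * e + (\<alpha> * \<delta> - \<gamma> * \<beta>) * h * t / (2 * sqrt 3)"
  unfolding rk3_step_def Let_def deriv_affine deriv_const rk3_stability_def k_def e_def
  by (simp add: field_simps power2_eq_square power3_eq_cube)

lemma measurable_rk3_step_affine: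
  "(\<lambda>(x, w, t). rk3_step (\<lambda>y. \<alpha> * y + \<beta>) (\<lambda>y. \<gamma> * y + \<delta>) h x w t) \<in> borel_measurable borel"
  unfolding rk3_step_affine rk3_stability_def borel_prod[symmetric] by measurable

lemma
  fixes \<sigma> :: real
  assumes "prob_space M" "\<sigma> > 0" "distributed M lborel Z (normal_density 0 \<sigma>)"
  shows integrable_normal_cubic: "integrable M (\<lambda>\<omega>. a + b * Z \<omega> + c * Z \<omega>^2 + d * Z \<omega>^3)"
    and integral_normal_cubic: "(\<integral>\<omega>. a + b * Z \<omega> + c * Z \<omega>^2 + d * Z \<omega>^3 \<partial>M) = a + c * \<sigma>^2"
proof -
  interpret prob_space M by fact
  have int: "integrable M (\<lambda>\<omega>. Z \<omega> ^ k)" for k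
    using distributed_integrable[OF assms(3), of "\<lambda>x. x ^ k"]
      integrable_normal_moment[OF assms(2), of 0 k] by simp
  have moment: "(\<integral>\<omega>. Z \<omega> ^ k \<partial>M) = (\<integral>x. normal_density 0 \<sigma> x * x ^ k \<partial>lborel)" for k
    using distributed_integral[OF assms(3), of "\<lambda>x. x ^ k"] by simp
  have "(\<integral>\<omega>. Z \<omega> \<partial>M) = 0"
    using moment[of 1] integral_normal_moment_odd[OF assms(2), of 0 0] by simp
  moreover have "(\<integral>\<omega>. Z \<omega> ^ 2 \<partial>M) = \<sigma>^2"
    using moment[of 2] integral_normal_moment_even[OF assms(2), of 0 1] by (simp add: numeral_eq_Suc)
  moreover have "(\<integral>\<omega>. Z \<omega> ^ 3 \<partial>M) = 0"
    using moment[of 3] integral_normal_moment_odd[OF assms(2), of 0 1] by (simp add: numeral_eq_Suc)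
  ultimately show "(\<integral>\<omega>. a + b * Z \<omega> + c * Z \<omega>^2 + d * Z \<omega>^3 \<partial>M) = a + c * \<sigma>^2"
    using int[of 1] int by (simp add: prob_space)
  show "integrable M (\<lambda>\<omega>. a + b * Z \<omega> + c * Z \<omega>^2 + d * Z \<omega>^3)"
    using int[of 1] int by simp
qed

lemma
  fixes \<sigma> :: real
  assumes "prob_space M" "\<sigma> > 0" "distributed M lborel Z (normal_density 0 \<sigma>)"
  shows integrable_rk3_stability_normal: "integrable M (\<lambda>\<omega>. rk3_stability (\<kappa> + \<gamma> * Z \<omega>))"
    and integral_rk3_stability_normal:
      "(\<integral>\<omega>. rk3_stability (\<kappa> + \<gamma> * Z \<omega>) \<partial>M) = rk3_stability \<kappa> + (1 + \<kappa>) * \<gamma>^2 * \<sigma>^2 / 2"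
proof -
  have cubic: "rk3_stability (\<kappa> + \<gamma> * w) = rk3_stability \<kappa> + \<gamma> * (1 + \<kappa> + \<kappa>^2 / 2) * w
      + \<gamma>^2 * (1 + \<kappa>) / 2 * w^2 + \<gamma>^3 / 6 * w^3" for w
    by (simp add: rk3_stability_def field_simps power2_eq_square power3_eq_cube)
  show "integrable M (\<lambda>\<omega>. rk3_stability (\<kappa> + \<gamma> * Z \<omega>))"
    unfolding cubic by (rule integrable_normal_cubic[OF assms])
  show "(\<integral>\<omega>. rk3_stability (\<kappa> + \<gamma> * Z \<omega>) \<partial>M) = rk3_stability \<kappa> + (1 + \<kappa>) * \<gamma>^2 * \<sigma>^2 / 2"
    unfolding cubic integral_normal_cubic[OF assms] by simp
qed

lemma
  fixes \<sigma> \<kappa> \<gamma> :: real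
  assumes "prob_space M" "\<sigma> > 0" "distributed M lborel Z (normal_density 0 \<sigma>)"
  defines "k \<equiv> \<lambda>\<omega>. \<kappa> + \<gamma> * Z \<omega>"
  shows integrable_rk3_offset_normal: "integrable M (\<lambda>\<omega>. (1 + k \<omega> / 2 + k \<omega>^2 / 6) * (e + \<delta> * Z \<omega>))"
    and integral_rk3_offset_normal:
      "(\<integral>\<omega>. (1 + k \<omega> / 2 + k \<omega>^2 / 6) * (e + \<delta> * Z \<omega>) \<partial>M)
        = e * (1 + \<kappa> / 2 + \<kappa>^2 / 6 + \<gamma>^2 * \<sigma>^2 / 6) + \<delta> * \<gamma> * \<sigma>^2 * (1 / 2 + \<kappa> / 3)"
proof -
  have cubic: "(1 + k \<omega> / 2 + k \<omega>^2 / 6) * (e + \<delta> * Z \<omega>)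
      = e * (1 + \<kappa> / 2 + \<kappa>^2 / 6) + (e * \<gamma> * (1 / 2 + \<kappa> / 3) + \<delta> * (1 + \<kappa> / 2 + \<kappa>^2 / 6)) * Z \<omega>
        + (e * \<gamma>^2 / 6 + \<delta> * \<gamma> * (1 / 2 + \<kappa> / 3)) * Z \<omega>^2 + \<delta> * \<gamma>^2 / 6 * Z \<omega>^3" for \<omega>
    by (simp add: k_def field_simps power2_eq_square power3_eq_cube)
  show "integrable M (\<lambda>\<omega>. (1 + k \<omega> / 2 + k \<omega>^2 / 6) * (e + \<delta> * Z \<omega>))"
    unfolding cubic by (rule integrable_normal_cubic[OF assms(1-3)])
  show "(\<integral>\<omega>. (1 + k \<omega> / 2 + k \<omega>^2 / 6) * (e + \<delta> * Z \<omega>) \<partial>M)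
        = e * (1 + \<kappa> / 2 + \<kappa>^2 / 6 + \<gamma>^2 * \<sigma>^2 / 6) + \<delta> * \<gamma> * \<sigma>^2 * (1 / 2 + \<kappa> / 3)"
    unfolding cubic integral_normal_cubic[OF assms(1-3)] by (simp add: algebra_simps)
qed

lemma rk3_iter_eq_coordinates:
  assumes "n \<le> m"
  shows "rk3_iter f g h x0 (\<lambda>i z. z (Inl i)) (\<lambda>i z. z (Inr i)) n
      (restrict (\<lambda>i. (case i of Inl k \<Rightarrow> dW k | Inr k \<Rightarrow> dWt k) \<omega>) ({..<m} <+> {..<m}))
    = rk3_iter f g h x0 dW dWt n \<omega>"
  using assms by (induction n) auto

lemma measurable_rk3_iter_coordinates:
  assumes step: "(\<lambda>(x, w, t). rk3_step f g h x w t) \<in> borel_measurable borel"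
    and "n \<le> m"
  shows "rk3_iter f g h x0 (\<lambda>i z. z (Inl i)) (\<lambda>i z. z (Inr i)) n
    \<in> borel_measurable (PiM ({..<m} <+> {..<m}) (\<lambda>_. borel))"
  using \<open>n \<le> m\<close>
proof (induction n)
  case 0
  then show ?case by simp
next
  case (Suc n)
  have [measurable]: "(\<lambda>z. z (Inl n)) \<in> borel_measurable (PiM ({..<m} <+> {..<m}) (\<lambda>_. borel))"
    "(\<lambda>z. z (Inr n)) \<in> borel_measurable (PiM ({..<m} <+> {..<m}) (\<lambda>_. borel))"
    using Suc.prems by (auto intro!: measurable_component_singleton)
  have [measurable]: "rk3_iter f g h x0 (\<lambda>i z. z (Inl i)) (\<lambda>i z. z (Inr i)) n
    \<in> borel_measurable (PiM ({..<m} <+> {..<m}) (\<lambda>_. borel))"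
    using Suc by simp
  have "(\<lambda>z. (rk3_iter f g h x0 (\<lambda>i z. z (Inl i)) (\<lambda>i z. z (Inr i)) n z, z (Inl n), z (Inr n)))
    \<in> borel_measurable (PiM ({..<m} <+> {..<m}) (\<lambda>_. borel))"
    unfolding borel_prod[symmetric] by measurable
  from measurable_compose[OF this step] show ?case by simp
qed

lemma indep_rk3_iter_increment:
  assumes "prob_space M"
    and indep: "prob_space.indep_vars M (\<lambda>_. borel)
      (\<lambda>i. case i of Inl n \<Rightarrow> dW n | Inr n \<Rightarrow> dWt n) (UNIV :: (nat + nat) set)"
    and step: "(\<lambda>(x, w, t). rk3_step f g h x w t) \<in> borel_measurable borel"
  shows "prob_space.indep_var M borel (rk3_iter f g h x0 dW dWt n) borel (dW n)"
proof -
  interpret prob_space M by fact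
  define X where "X = (\<lambda>i. case i of Inl n \<Rightarrow> dW n | Inr n \<Rightarrow> dWt n)"
  \<comment> \<open>the scheme driven by coordinate projections, to be fed the increments of index below \<open>n\<close>\<close>
  define \<Phi> where "\<Phi> = rk3_iter f g h x0 (\<lambda>i z. z (Inl i)) (\<lambda>i z. z (Inr i)) n"
  have "indep_var (PiM ({..<n} <+> {..<n}) (\<lambda>_. borel)) (\<lambda>\<omega>. restrict (\<lambda>i. X i \<omega>) ({..<n} <+> {..<n}))
      (PiM {Inl n} (\<lambda>_. borel)) (\<lambda>\<omega>. restrict (\<lambda>i. X i \<omega>) {Inl n})"
    by (rule indep_var_restrict[OF indep[folded X_def]]) auto
  then have "indep_var borel (\<Phi> \<circ> (\<lambda>\<omega>. restrict (\<lambda>i. X i \<omega>) ({..<n} <+> {..<n})))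
      borel ((\<lambda>z. z (Inl n)) \<circ> (\<lambda>\<omega>. restrict (\<lambda>i. X i \<omega>) {Inl n}))"
    by (rule indep_var_compose)
      (auto simp: \<Phi>_def intro: measurable_rk3_iter_coordinates[OF step] measurable_component_singleton)
  moreover have "\<Phi> \<circ> (\<lambda>\<omega>. restrict (\<lambda>i. X i \<omega>) ({..<n} <+> {..<n})) = rk3_iter f g h x0 dW dWt n"
    by (simp add: \<Phi>_def X_def comp_def rk3_iter_eq_coordinates)
  moreover have "(\<lambda>z. z (Inl n)) \<circ> (\<lambda>\<omega>. restrict (\<lambda>i. X i \<omega>) {Inl n}) = dW n"
    by (auto simp: X_def)
  ultimately show ?thesis by simp
qed

lemma
  fixes M :: "'a measure" and X W V :: "'a \<Rightarrow> real"
  assumes "prob_space M"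
    and indep: "prob_space.indep_var M borel X borel W" and B: "B \<in> borel_measurable borel"
    and X: "integrable M X" and BW: "integrable M (\<lambda>\<omega>. B (W \<omega>))"
    and AW: "integrable M (\<lambda>\<omega>. A (W \<omega>))" and V: "integrable M V"
  shows integrable_indep_mult_add: "integrable M (\<lambda>\<omega>. X \<omega> * B (W \<omega>) + A (W \<omega>) + d * V \<omega>)"
    and integral_indep_mult_add: "(\<integral>\<omega>. X \<omega> * B (W \<omega>) + A (W \<omega>) + d * V \<omega> \<partial>M)
      = (\<integral>\<omega>. X \<omega> \<partial>M) * (\<integral>\<omega>. B (W \<omega>) \<partial>M) + (\<integral>\<omega>. A (W \<omega>) \<partial>M) + d * (\<integral>\<omega>. V \<omega> \<partial>M)"
proof -
  interpret prob_space M by fact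
  have "indep_var borel X borel (\<lambda>\<omega>. B (W \<omega>))"
    using indep_var_compose[OF indep measurable_ident B] by (simp add: comp_def)
  note product = indep_var_integrable[OF this X BW] indep_var_lebesgue_integral[OF this X BW]
  show "integrable M (\<lambda>\<omega>. X \<omega> * B (W \<omega>) + A (W \<omega>) + d * V \<omega>)"
    using product AW V by simp
  show "(\<integral>\<omega>. X \<omega> * B (W \<omega>) + A (W \<omega>) + d * V \<omega> \<partial>M)
      = (\<integral>\<omega>. X \<omega> \<partial>M) * (\<integral>\<omega>. B (W \<omega>) \<partial>M) + (\<integral>\<omega>. A (W \<omega>) \<partial>M) + d * (\<integral>\<omega>. V \<omega> \<partial>M)"
    using product AW V by simp
qed

lemma integral_rk3_iter_affine_Suc:
  fixes M :: "'a measure" and \<alpha> \<beta> \<gamma> \<delta> h x0 :: real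
  assumes "prob_space M" and "h > 0"
    and dW: "\<And>n. distributed M lborel (dW n) (normal_density 0 (sqrt h))"
    and dWt: "\<And>n. distributed M lborel (dWt n) (normal_density 0 (sqrt h))"
    and indep: "prob_space.indep_vars M (\<lambda>_. borel)
      (\<lambda>i. case i of Inl n \<Rightarrow> dW n | Inr n \<Rightarrow> dWt n) (UNIV :: (nat + nat) set)"
  defines "x \<equiv> rk3_iter (\<lambda>y. \<alpha> * y + \<beta>) (\<lambda>y. \<gamma> * y + \<delta>) h x0 dW dWt"
    and "\<kappa> \<equiv> (\<alpha> - \<gamma>^2 / 2) * h" and "e \<equiv> (\<beta> - \<gamma> * \<delta> / 2) * h"
  shows "(\<integral>\<omega>. x (Suc n) \<omega> \<partial>M)
    = (rk3_stability \<kappa> + (1 + \<kappa>) * \<gamma>^2 * h / 2) * (\<integral>\<omega>. x n \<omega> \<partial>M)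
      + (e * (1 + \<kappa> / 2 + \<kappa>^2 / 6 + \<gamma>^2 * h / 6) + \<delta> * \<gamma> * h * (1 / 2 + \<kappa> / 3))"
proof -
  interpret prob_space M by fact
  have sqrt_h: "sqrt h > 0" "(sqrt h)^2 = h" using \<open>h > 0\<close> by simp_all
  define G where "G = (\<lambda>w. rk3_stability (\<kappa> + \<gamma> * w))"
  define A where "A = (\<lambda>w. (1 + (\<kappa> + \<gamma> * w) / 2 + (\<kappa> + \<gamma> * w)^2 / 6) * (e + \<delta> * w))"
  define d where "d = (\<alpha> * \<delta> - \<gamma> * \<beta>) * h / (2 * sqrt 3)"
  have x_Suc: "x (Suc n) = (\<lambda>\<omega>. x n \<omega> * G (dW n \<omega>) + A (dW n \<omega>) + d * dWt n \<omega>)" for n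
    unfolding x_def rk3_iter.simps rk3_step_affine
    by (simp add: G_def A_def d_def \<kappa>_def e_def)
  have G_measurable: "G \<in> borel_measurable borel"
    unfolding G_def rk3_stability_def by measurable
  have G: "integrable M (\<lambda>\<omega>. G (dW n \<omega>))"
      "(\<integral>\<omega>. G (dW n \<omega>) \<partial>M) = rk3_stability \<kappa> + (1 + \<kappa>) * \<gamma>^2 * h / 2" for n
    using integrable_rk3_stability_normal[OF assms(1) sqrt_h(1) dW]
      integral_rk3_stability_normal[OF assms(1) sqrt_h(1) dW]
    by (simp_all add: G_def sqrt_h(2))
  have A: "integrable M (\<lambda>\<omega>. A (dW n \<omega>))"
      "(\<integral>\<omega>. A (dW n \<omega>) \<partial>M)
        = e * (1 + \<kappa> / 2 + \<kappa>^2 / 6 + \<gamma>^2 * h / 6) + \<delta> * \<gamma> * h * (1 / 2 + \<kappa> / 3)" for n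
    using integrable_rk3_offset_normal[OF assms(1) sqrt_h(1) dW]
      integral_rk3_offset_normal[OF assms(1) sqrt_h(1) dW]
    by (simp_all add: A_def sqrt_h(2))
  note noise = integrable_normal_cubic[OF assms(1) sqrt_h(1) dWt, where a=0 and b=1 and c=0 and d=0, simplified]
    integral_normal_cubic[OF assms(1) sqrt_h(1) dWt, where a=0 and b=1 and c=0 and d=0, simplified]
  have indep_x: "indep_var borel (x n) borel (dW n)" for n
    unfolding x_def by (rule indep_rk3_iter_increment[OF assms(1) indep measurable_rk3_step_affine])
  have x_integrable: "integrable M (x n)" for n
  proof (induction n)
    case 0
    then show ?case by (simp add: x_def)
  next
    case (Suc n)
    then show ?case
      unfolding x_Suc by (rule integrable_indep_mult_add[OF assms(1) indep_x G_measurable _ G(1) A(1) noise(1)])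
  qed
  show ?thesis
    unfolding x_Suc integral_indep_mult_add[OF assms(1) indep_x G_measurable x_integrable G(1) A(1) noise(1)]
    by (simp add: G(2) A(2) noise(2))
qed

lemma tendsto_affine_recurrence:
  fixes u :: "nat \<Rightarrow> real"
  assumes rec: "\<And>n. u (Suc n) = a + c * u n" and "\<bar>c\<bar> < 1"
  shows "u \<longlonglongrightarrow> a / (1 - c)"
proof -
  define L where "L = a / (1 - c)"
  have "1 - c \<noteq> 0" using \<open>\<bar>c\<bar> < 1\<close> by simp
  then have fixpoint: "a + c * L = L"
    by (simp add: L_def field_simps)
  have closed_form: "u n = L + (u 0 - L) * c^n" for n
  proof (induction n)
    case 0
    then show ?case by simp
  next
    case (Suc n)
    have "u (Suc n) = (a + c * L) + (u 0 - L) * c^Suc n"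
      using rec[of n] Suc by (simp add: algebra_simps)
    then show ?case using fixpoint by simp
  qed
  have "(\<lambda>n. L + (u 0 - L) * c^n) \<longlonglongrightarrow> L + (u 0 - L) * 0"
    using \<open>\<bar>c\<bar> < 1\<close> by (intro tendsto_intros LIMSEQ_abs_realpow_zero2)
  then have "(\<lambda>n. L + (u 0 - L) * c^n) \<longlonglongrightarrow> L"
    by simp
  moreover have "u = (\<lambda>n. L + (u 0 - L) * c^n)"
    by (intro ext closed_form)
  ultimately show ?thesis
    unfolding L_def[symmetric] by argo
qed

lemma integral_rk3_iter_linear_Suc:
  fixes M :: "'a measure" and eta h x0 :: real
  assumes "prob_space M" and "h > 0"
    and "\<And>n. distributed M lborel (dW n) (normal_density 0 (sqrt h))"
    and "\<And>n. distributed M lborel (dWt n) (normal_density 0 (sqrt h))"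
    and "prob_space.indep_vars M (\<lambda>_. borel)
      (\<lambda>i. case i of Inl n \<Rightarrow> dW n | Inr n \<Rightarrow> dWt n) (UNIV :: (nat + nat) set)"
  defines "x \<equiv> rk3_iter (\<lambda>y. - y) (\<lambda>y. 1 + eta * y) h x0 dW dWt"
  shows "(\<integral>\<omega>. x (Suc n) \<omega> \<partial>M)
    = - 1/24 * h^2 * eta * (2 + 3 * eta^2) - 1/48 * h^3 * eta * (2 + eta^2)^2
      + (1 - h + 1/8 * h^2 * (4 - eta^4) - 1/48 * h^3 * (2 + eta^2)^3) * (\<integral>\<omega>. x n \<omega> \<partial>M)"
proof -
  have x_affine: "x = rk3_iter (\<lambda>y. (- 1) * y + 0) (\<lambda>y. eta * y + 1) h x0 dW dWt"
    unfolding x_def by (simp add: add.commute)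
  \<comment> \<open>\<open>gain\<close> and \<open>offset\<close> are written in the literal form of the instance \<open>\<alpha> = -1, \<beta> = 0, \<gamma> = eta, \<delta> = 1\<close>
    of \<open>integral_rk3_iter_affine_Suc\<close>, so that they can be unfolded into it\<close>
  have gain: "rk3_stability ((- 1 - eta^2 / 2) * h) + (1 + (- 1 - eta^2 / 2) * h) * eta^2 * h / 2
      = 1 - h + 1/8 * h^2 * (4 - eta^4) - 1/48 * h^3 * (2 + eta^2)^3"
    unfolding rk3_stability_def by (simp add: field_simps power_numeral_reduce)
  have offset: "(0 - eta * 1 / 2) * h * (1 + (- 1 - eta^2 / 2) * h / 2 + ((- 1 - eta^2 / 2) * h)^2 / 6
      + eta^2 * h / 6) + 1 * eta * h * (1 / 2 + (- 1 - eta^2 / 2) * h / 3)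
      = - 1/24 * h^2 * eta * (2 + 3 * eta^2) - 1/48 * h^3 * eta * (2 + eta^2)^2"
    by (simp add: field_simps power_numeral_reduce)
  show ?thesis
    using integral_rk3_iter_affine_Suc[OF assms(1-5), where \<alpha>="- 1" and \<beta>=0 and \<gamma>=eta and \<delta>=1]
    unfolding x_affine gain offset by (simp only: add.commute)
qed

lemma rk3_mean_fixpoint:
  fixes eta h :: real
  defines "c \<equiv> 1 - h + 1/8 * h^2 * (4 - eta^4) - 1/48 * h^3 * (2 + eta^2)^3"
  assumes "h > 0" and "\<bar>c\<bar> < 1"
  shows "(- 1/24 * h^2 * eta * (2 + 3 * eta^2) - 1/48 * h^3 * eta * (2 + eta^2)^2) / (1 - c)
    = - (h * eta * (4 + 6 * eta^2 + h * (2 + eta^2)^2)) / (48 - 6 * h * (4 - eta^4) + h^2 * (2 + eta^2)^3)"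
proof -
  define D where "D = 48 - 6 * h * (4 - eta^4) + h^2 * (2 + eta^2)^3"
  have one_minus_c: "1 - c = h * D / 48"
    unfolding c_def D_def by (simp add: field_simps power_numeral_reduce)
  moreover have "1 - c \<noteq> 0"
    using \<open>\<bar>c\<bar> < 1\<close> by simp
  ultimately have "h \<noteq> 0" "D \<noteq> 0"
    by auto
  then show ?thesis
    unfolding one_minus_c D_def[symmetric] by (simp add: field_simps power_numeral_reduce)
qed

theorem mainTheorem8:
  fixes M :: "'a measure" and eta h x0 :: real and dW dWt :: "nat \<Rightarrow> 'a \<Rightarrow> real"
  assumes "prob_space M"
    and "h > 0"
    and "\<And>n. distributed M lborel (dW n) (normal_density 0 (sqrt h))"
    and "\<And>n. distributed M lborel (dWt n) (normal_density 0 (sqrt h))"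
    and "prob_space.indep_vars M (\<lambda>_. borel)
           (\<lambda>i. case i of Inl n \<Rightarrow> dW n | Inr n \<Rightarrow> dWt n) (UNIV :: (nat + nat) set)"
  defines "mu \<equiv> (\<lambda>n. integral\<^sup>L M (rk3_iter (\<lambda>y. - y) (\<lambda>y. 1 + eta * y) h x0 dW dWt n))"
    and "c \<equiv> 1 - h + 1/8 * h^2 * (4 - eta^4) - 1/48 * h^3 * (2 + eta^2)^3"
    and "L \<equiv> (\<lambda>k::real. - (k * eta * (4 + 6 * eta^2 + k * (2 + eta^2)^2))
                 / (48 - 6 * k * (4 - eta^4) + k^2 * (2 + eta^2)^3))"
  shows "(\<forall>n. mu (Suc n) = - 1/24 * h^2 * eta * (2 + 3 * eta^2)
                          - 1/48 * h^3 * eta * (2 + eta^2)^2 + c * mu n)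
         \<and> (\<bar>c\<bar> < 1 \<longrightarrow> mu \<longlonglongrightarrow> L h)
         \<and> L \<in> O[at_right 0](\<lambda>k. k)"
proof -
  define a where "a = - 1/24 * h^2 * eta * (2 + 3 * eta^2) - 1/48 * h^3 * eta * (2 + eta^2)^2"
  have recursion: "mu (Suc n) = a + c * mu n" for n
    unfolding mu_def a_def c_def by (rule integral_rk3_iter_linear_Suc[OF assms(1-5)])
  have "mu \<longlonglongrightarrow> L h" if "\<bar>c\<bar> < 1"
    using tendsto_affine_recurrence[of mu a c, OF recursion that]
      rk3_mean_fixpoint[OF \<open>h > 0\<close> that[unfolded c_def]]
    unfolding a_def c_def L_def by simp
  moreover have "L \<in> O[at_right 0](\<lambda>k. k)"
    unfolding L_def by real_asymp
  ultimately show ?thesis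
    using recursion by (simp add: a_def)
qed

end
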